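(* Let $\Gamma$ be a weighted digraph with Kirchhoff matrix $L$, out-forest dimension $d$, and normalized matrix of maximum out-forests $\bar J$. Then $\operatorname{rank}\bar J=d$, $\bar J^2=\bar J$, and $L\bar J=\bar J L=0$.
   Context: A weighted digraph $\Gamma$ has vertex set $\{1,\dots,n\}$, no loops, and each arc $j\to i$ ($j\ne i$) has a positive weight $a_{ij}$; $a_{ij}=0$ if there is no such arc. Its Kirchhoff matrix $L=[\ell_{ij}]$ has $\ell_{ij}=-a_{ij}$ for $j\ne i$ and $\ell_{ii}=\sum_{k\ne i}a_{ik}$. A diverging tree is a rooted directed tree with directed paths from its root to all its other vertices; an out-forest of $\Gamma$ is a spanning subgraph whose weak components are diverging trees; a maximum out-forest is an out-forest with the maximum number of arcs; the out-forest dimension $d$ is the number of trees in a maximum out-forest. The weight of a subgraph is the product of the weights of its arcs. The normalized matrix of maximum out-forests $\bar J=[\bar J_{ij}]$ is defined by: $\bar J_{ij}$ equals the total weight of those maximum out-forests of $\Gamma$ in which vertex $i$ belongs to the tree whose root is $j$, divided by the total weight of all maximum out-forests of $\Gamma$. *)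

theory Defs
  imports "HOL-Analysis.Analysis"
begin

text \<open>The weighted digraph is given by
  a nonnegative real matrix a, where a $ i $ j (for j \<noteq> i) is the weight of the arc j \<rightarrow> i,
  and the arc exists iff a $ i $ j > 0. An arc j \<rightarrow> i is represented as the pair (j, i).\<close>

definition arcs :: "real^'n^'n \<Rightarrow> ('n \<times> 'n) set" where
  "arcs a = {(j, i). j \<noteq> i \<and> a $ i $ j > 0}"

definition kirchhoff :: "real^'n^'n \<Rightarrow> real^'n^'n" where
  "kirchhoff a = (\<chi> i j. if i = j then (\<Sum>k\<in>UNIV - {i}. a $ i $ k) else - a $ i $ j)"

definition weak_comp :: "('n \<times> 'n) set \<Rightarrow> 'n \<Rightarrow> 'n set" where
  "weak_comp F i = {v. (i, v) \<in> (F \<union> F\<inverse>)\<^sup>*}"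

text \<open>A diverging tree with vertex set C and arc set T: a rooted directed tree
  (underlying graph a tree, i.e. connected with card C - 1 arcs) with directed paths
  from its root r to all other vertices.\<close>
definition diverging_tree :: "'n set \<Rightarrow> ('n \<times> 'n) set \<Rightarrow> bool" where
  "diverging_tree C T \<longleftrightarrow> T \<subseteq> C \<times> C \<and> card T + 1 = card C \<and>
     (\<exists>r\<in>C. \<forall>v\<in>C. (r, v) \<in> T\<^sup>*)"

definition out_forest :: "real^'n^'n \<Rightarrow> ('n \<times> 'n) set \<Rightarrow> bool" where
  "out_forest a F \<longleftrightarrow> F \<subseteq> arcs a \<and>
     (\<forall>i. diverging_tree (weak_comp F i) (F \<inter> (weak_comp F i \<times> weak_comp F i)))"

definition max_out_forest :: "real^'n^'n \<Rightarrow> ('n \<times> 'n) set \<Rightarrow> bool" where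
  "max_out_forest a F \<longleftrightarrow> out_forest a F \<and> (\<forall>G. out_forest a G \<longrightarrow> card G \<le> card F)"

definition num_trees :: "('n \<times> 'n) set \<Rightarrow> nat" where
  "num_trees F = card (range (weak_comp F))"

definition out_forest_dim :: "real^'n^'n \<Rightarrow> nat" where
  "out_forest_dim a = num_trees (SOME F. max_out_forest a F)"

definition in_tree_rooted_at :: "('n \<times> 'n) set \<Rightarrow> 'n \<Rightarrow> 'n \<Rightarrow> bool" where
  "in_tree_rooted_at F i j \<longleftrightarrow> j \<in> weak_comp F i \<and> (\<forall>v\<in>weak_comp F i. (j, v) \<in> F\<^sup>*)"

definition weight :: "real^'n^'n \<Rightarrow> ('n \<times> 'n) set \<Rightarrow> real" where
  "weight a F = (\<Prod>(j, i)\<in>F. a $ i $ j)"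

definition norm_max_out_forest_matrix :: "real^'n^'n \<Rightarrow> real^'n^'n" where
  "norm_max_out_forest_matrix a =
     (\<chi> i j. (\<Sum>F\<in>{F. max_out_forest a F \<and> in_tree_rooted_at F i j}. weight a F)
            / (\<Sum>F\<in>{F. max_out_forest a F}. weight a F))"

end

theory Submission
  imports Defs
begin

text \<open>
  Out-forests are identified with forests (acyclic arc sets
  in which every vertex has at most one parent) built from arcs of the digraph, and J i j is
  the relative weight of the maximum out-forests in which j is the root of i. An
  augmentation argument shows that in a maximum out-forest each root r reaches, inside its
  own tree, every vertex from which r is reachable in the digraph. Based on this, three
  weight-preserving exchange bijections on (pairs of) maximum out-forests are constructed:
  reattaching a subtree gives the row balance behind LJ = 0, rerooting a tree gives the
  column balance behind JL = 0, and grafting two forests along the ancestors of a root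
  gives the convolution identity behind J * J = J. Finally the trace of J counts the
  roots of a maximum out-forest, i.e. d, and the rank of an idempotent matrix equals its
  trace, which is proved first by elementary linear algebra.
\<close>

section \<open>Rank of idempotent matrices\<close>

lemma idempotent_fixes_range:
  fixes P :: "real^'n^'n"
  assumes "P ** P = P" and "y \<in> range ((*v) P)"
  shows "P *v y = y"
  using assms by (auto simp: matrix_vector_mul_assoc)

lemma idempotent_kills_complement:
  fixes P :: "real^'n^'n"
  assumes "P ** P = P" and "y \<in> range (\<lambda>x. x - P *v x)"
  shows "P *v y = 0"
  using assms by (auto simp: matrix_vector_mul_assoc matrix_vector_mult_diff_distrib)

text \<open>The two ranges are complementary subspaces, so their dimensions add up to n.\<close>
lemma idempotent_dims:
  fixes P :: "real^'n^'n"
  assumes PP: "P ** P = P"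
  shows "rank P + dim (range (\<lambda>x. x - P *v x)) = CARD('n)"
proof -
  define R where "R = range ((*v) P)"
  define K where "K = range (\<lambda>x. x - P *v x)"
  have lin: "linear (\<lambda>x. x - P *v x)"
    by (intro linear_compose_sub matrix_vector_mul_linear bounded_linear.linear bounded_linear_ident)
  have subR: "subspace R" unfolding R_def
    by (rule linear_subspace_image[OF matrix_vector_mul_linear subspace_UNIV])
  have subK: "subspace K" unfolding K_def
    by (rule linear_subspace_image[OF lin subspace_UNIV])
  have "R \<inter> K \<subseteq> {0}"
  proof
    fix y assume y: "y \<in> R \<inter> K"
    have "P *v y = y" by (rule idempotent_fixes_range[OF PP]) (use y R_def in blast)
    moreover have "P *v y = 0" by (rule idempotent_kills_complement[OF PP]) (use y K_def in blast)
    ultimately show "y \<in> {0}" by simp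
  qed
  then have "R \<inter> K = {0}" using subR subK by (auto simp: subspace_0)
  moreover have "{x + y |x y. x \<in> R \<and> y \<in> K} = UNIV"
  proof -
    have "z \<in> {x + y |x y. x \<in> R \<and> y \<in> K}" for z
    proof -
      have "z = P *v z + (z - P *v z)" by simp
      then show ?thesis unfolding R_def K_def by blast
    qed
    then show ?thesis by blast
  qed
  ultimately show ?thesis
    using dim_sums_Int[OF subR subK] by (simp add: rank_dim_range R_def K_def)
qed

text \<open>A set spanning both ranges spans the whole space, since z = P z + (z - P z).\<close>
lemma span_of_complementary_ranges:
  fixes P :: "real^'n^'n"
  assumes "range ((*v) P) \<subseteq> span B" "range (\<lambda>x. x - P *v x) \<subseteq> span B"
  shows "span B = UNIV"
proof -
  have "P *v z + (z - P *v z) \<in> span B" for z using assms by (intro span_add) auto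
  then show ?thesis by auto
qed

lemma matrix_with_columns:
  fixes B1 B2 :: "(real^'n) set"
  assumes fin: "finite B1" "finite B2" and dims: "card B1 + card B2 = CARD('n)"
  obtains U :: "'n set" and S :: "real^'n^'n"
  where "card U = card B1" "B1 \<union> B2 \<subseteq> columns S"
    "\<And>k. k \<in> U \<Longrightarrow> column k S \<in> B1" "\<And>k. k \<notin> U \<Longrightarrow> column k S \<in> B2"
proof -
  obtain U :: "'n set" where U: "card U = card B1"
    using obtain_subset_with_card_n[of "card B1" "UNIV :: 'n set"] dims by auto
  have "card (- U) = card B2"
    using U dims by (simp add: Compl_eq_Diff_UNIV card_Diff_subset)
  then obtain b1 b2 where b1: "bij_betw b1 U B1" and b2: "bij_betw b2 (- U) B2"
    using finite_same_card_bij[of U B1] finite_same_card_bij[of "- U" B2] U fin by auto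
  define S :: "real^'n^'n" where "S = (\<chi> i k. if k \<in> U then b1 k $ i else b2 k $ i)"
  have col: "column k S = (if k \<in> U then b1 k else b2 k)" for k
    by (simp add: S_def column_def vec_eq_iff)
  have "B1 \<subseteq> columns S" "B2 \<subseteq> columns S"
    using b1 b2 col unfolding bij_betw_def columns_def by force+
  moreover have "column k S \<in> B1" if "k \<in> U" for k
    using b1 col that by (auto simp: bij_betw_def)
  moreover have "column k S \<in> B2" if "k \<notin> U" for k
    using b2 col that by (auto simp: bij_betw_def)
  ultimately show ?thesis using that U by blast
qed

lemma idempotent_eigenbasis:
  fixes P :: "real^'n^'n"
  assumes PP: "P ** P = P"
  obtains S :: "real^'n^'n" and S' :: "real^'n^'n" and U :: "'n set"
  where "S' ** S = mat 1" "card U = rank P"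
    "\<And>k. P *v column k S = (if k \<in> U then column k S else 0)"
proof -
  define R where "R = range ((*v) P)"
  define K where "K = range (\<lambda>x. x - P *v x)"
  obtain B1 where B1: "B1 \<subseteq> R" "independent B1" "R \<subseteq> span B1" "card B1 = dim R"
    using basis_exists by blast
  obtain B2 where B2: "B2 \<subseteq> K" "independent B2" "K \<subseteq> span B2" "card B2 = dim K"
    using basis_exists by blast
  have "finite B1" "finite B2" using B1(2) B2(2) by (auto intro: finiteI_independent)
  moreover have "card B1 + card B2 = CARD('n)"
    using idempotent_dims[OF PP] B1(4) B2(4) by (simp add: rank_dim_range R_def K_def)
  ultimately obtain U :: "'n set" and S :: "real^'n^'n" where U: "card U = card B1" and cols: "B1 \<union> B2 \<subseteq> columns S"
    and colU: "\<And>k. k \<in> U \<Longrightarrow> column k S \<in> B1" and colK: "\<And>k. k \<notin> U \<Longrightarrow> column k S \<in> B2"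
    using matrix_with_columns by blast
  have "R \<subseteq> span (columns S)" "K \<subseteq> span (columns S)"
    using B1(3) B2(3) cols span_mono[of B1 "columns S"] span_mono[of B2 "columns S"] by blast+
  then have "span (columns S) = UNIV" unfolding R_def K_def by (rule span_of_complementary_ranges)
  then obtain S' where "S ** S' = mat 1"
    using matrix_right_invertible_span_columns[of S] by (auto simp: span_vec_eq)
  then have "S' ** S = mat 1" using matrix_left_right_inverse by blast
  moreover have "card U = rank P" using U B1(4) by (simp add: rank_dim_range R_def)
  moreover have "P *v column k S = (if k \<in> U then column k S else 0)" for k
  proof (cases "k \<in> U")
    case True
    then have "column k S \<in> R" using colU B1(1) by blast
    then have "P *v column k S = column k S" by (rule idempotent_fixes_range[OF PP, unfolded R_def[symmetric]])
    then show ?thesis using True by simp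
  next
    case False
    then have "column k S \<in> K" using colK B2(1) by blast
    then have "P *v column k S = 0" by (rule idempotent_kills_complement[OF PP, unfolded K_def[symmetric]])
    then show ?thesis using False by simp
  qed
  ultimately show ?thesis by (rule that)
qed

text \<open>The rank of an idempotent matrix equals its trace: conjugating by the eigenbasis
  gives the diagonal 0/1 matrix with rank P ones, and the trace is invariant.\<close>
lemma rank_idempotent:
  fixes P :: "real^'n^'n"
  assumes PP: "P ** P = P"
  shows "real (rank P) = trace P"
proof -
  obtain S S' :: "real^'n^'n" and U :: "'n set"
    where S'S: "S' ** S = mat 1" and U: "card U = rank P"
      and eig: "\<And>k. P *v column k S = (if k \<in> U then column k S else 0)"
    by (rule idempotent_eigenbasis[OF PP]) auto
  have SS': "S ** S' = mat 1" using S'S matrix_left_right_inverse by blast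
  have diag: "(S' ** P ** S) $ k $ k = (if k \<in> U then 1 else 0)" for k
  proof -
    have S'col: "S' *v column k S = axis k 1"
      by (metis S'S matrix_vector_mul_assoc matrix_vector_mul_lid matrix_vector_mult_basis)
    have "column k (S' ** P ** S) = S' *v (P *v column k S)"
      by (simp add: matrix_vector_mult_basis[symmetric] matrix_vector_mul_assoc matrix_mul_assoc)
    also have "\<dots> = (if k \<in> U then axis k 1 else 0)" by (simp add: eig S'col)
    finally show ?thesis by (auto simp: column_def vec_eq_iff axis_def)
  qed
  have "trace P = trace ((P ** S) ** S')" by (simp add: SS' matrix_mul_assoc[symmetric])
  also have "\<dots> = trace (S' ** (P ** S))" by (rule trace_mul_sym)
  also have "\<dots> = trace (S' ** P ** S)" by (simp add: matrix_mul_assoc)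
  also have "\<dots> = real (card U)" by (simp add: trace_def diag sum.If_cases)
  finally show ?thesis using U by simp
qed

section \<open>Forests of arcs\<close>

definition single_parent :: "('n \<times> 'n) set \<Rightarrow> bool" where
  "single_parent F \<longleftrightarrow> (\<forall>u u' v. (u,v) \<in> F \<longrightarrow> (u',v) \<in> F \<longrightarrow> u = u')"

definition is_root :: "('n \<times> 'n) set \<Rightarrow> 'n \<Rightarrow> bool" where
  "is_root F v \<longleftrightarrow> (\<forall>u. (u,v) \<notin> F)"

definition forest :: "('n \<times> 'n) set \<Rightarrow> bool" where
  "forest F \<longleftrightarrow> single_parent F \<and> acyclic F"

definition root_of :: "('n \<times> 'n) set \<Rightarrow> 'n \<Rightarrow> 'n" where
  "root_of F i = (THE r. is_root F r \<and> (r,i) \<in> F\<^sup>*)"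

definition parent :: "('n \<times> 'n) set \<Rightarrow> 'n \<Rightarrow> 'n" where
  "parent F v = (THE p. (p,v) \<in> F)"

definition child :: "('n \<times> 'n) set \<Rightarrow> 'n \<Rightarrow> 'n \<Rightarrow> 'n" where
  "child F j m = (THE c. (j,c) \<in> F \<and> (c,m) \<in> F\<^sup>*)"

lemma single_parent_eq: "single_parent F \<Longrightarrow> (u,v) \<in> F \<Longrightarrow> (u',v) \<in> F \<Longrightarrow> u = u'"
  by (auto simp: single_parent_def)

lemma single_parent_mono: "single_parent F \<Longrightarrow> G \<subseteq> F \<Longrightarrow> single_parent G"
  unfolding single_parent_def by blast

lemma forest_mono: "forest F \<Longrightarrow> G \<subseteq> F \<Longrightarrow> forest G"
  by (meson forest_def single_parent_mono acyclic_subset)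

lemma acyclic_no_back_path: "acyclic F \<Longrightarrow> (x,y) \<in> F \<Longrightarrow> (y,x) \<notin> F\<^sup>*"
  by (meson acyclic_def rtrancl_into_trancl2)

lemma is_root_rtrancl: "is_root F r \<Longrightarrow> (x,r) \<in> F\<^sup>* \<Longrightarrow> x = r"
  by (auto elim: rtranclE simp: is_root_def)

lemma parent_eq: "single_parent F \<Longrightarrow> (p,v) \<in> F \<Longrightarrow> parent F v = p"
  unfolding parent_def by (rule the_equality) (auto simp: single_parent_def)

lemma forest_insert_root_arc:
  assumes "forest F" "is_root F v" "(v,u) \<notin> F\<^sup>*"
  shows "forest (insert (u,v) F)"
proof -
  have "single_parent (insert (u,v) F)"
    using assms(1,2) by (auto simp: forest_def single_parent_def is_root_def)
  moreover have "acyclic (insert (u,v) F)" using assms(1,3) by (simp add: forest_def)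
  ultimately show ?thesis by (simp add: forest_def)
qed

lemma card_replace_arc:
  fixes F :: "('n::finite \<times> 'n) set"
  assumes "e \<in> F" "e' \<notin> F - {e}"
  shows "card (insert e' (F - {e})) = card F"
proof -
  have "card F > 0" using assms(1) by (auto simp: card_gt_0_iff)
  then show ?thesis using assms by (simp add: card_insert_if card_Diff_singleton)
qed

lemma single_parent_comparable:
  assumes "single_parent F" "(x,i) \<in> F\<^sup>*" "(y,i) \<in> F\<^sup>*"
  shows "(x,y) \<in> F\<^sup>* \<or> (y,x) \<in> F\<^sup>*"
  using assms(2,3)
proof (induction arbitrary: y rule: rtrancl_induct)
  case base then show ?case by simp
next
  case (step z i)
  show ?case
  proof (cases "y = i")
    case True with step show ?thesis by (meson rtrancl.rtrancl_into_rtrancl)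
  next
    case False
    with step.prems obtain w where w: "(y,w) \<in> F\<^sup>*" "(w,i) \<in> F" by (metis rtranclE)
    with step.hyps(2) assms(1) have "w = z" by (auto simp: single_parent_def)
    with step.IH w show ?thesis by blast
  qed
qed

lemma root_exists:
  fixes F :: "('n::finite \<times> 'n) set"
  assumes "acyclic F"
  shows "\<exists>r. is_root F r \<and> (r,i) \<in> F\<^sup>*"
proof -
  have "wf F" using finite_acyclic_wf[OF _ assms] by simp
  then show ?thesis
  proof (induction i rule: wf_induct_rule)
    case (less i)
    show ?case
    proof (cases "is_root F i")
      case True then show ?thesis by blast
    next
      case False
      then obtain u where u: "(u,i) \<in> F" by (auto simp: is_root_def)
      with less obtain r where "is_root F r" "(r,u) \<in> F\<^sup>*" by blast
      then show ?thesis using u by (meson rtrancl.rtrancl_into_rtrancl)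
    qed
  qed
qed

lemma root_eq:
  fixes F :: "('n::finite \<times> 'n) set"
  assumes "forest F"
  shows "root_of F i = r \<longleftrightarrow> is_root F r \<and> (r,i) \<in> F\<^sup>*"
proof -
  have uniq: "r1 = r2" if "is_root F r1" "(r1,i) \<in> F\<^sup>*" "is_root F r2" "(r2,i) \<in> F\<^sup>*" for r1 r2
    using single_parent_comparable[of F r1 i r2] that assms is_root_rtrancl unfolding forest_def by metis
  obtain r0 where r0: "is_root F r0" "(r0,i) \<in> F\<^sup>*" using root_exists assms forest_def by blast
  have "root_of F i = r0" unfolding root_of_def using r0 uniq by (intro the_equality) auto
  then show ?thesis using r0 uniq by auto
qed

lemma root_props:
  fixes F :: "('n::finite \<times> 'n) set"
  assumes "forest F"
  shows "is_root F (root_of F i)" "(root_of F i, i) \<in> F\<^sup>*"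
  using root_eq[OF assms] by auto

lemma root_step:
  fixes F :: "('n::finite \<times> 'n) set"
  assumes "forest F" "(x,y) \<in> F\<^sup>*"
  shows "root_of F y = root_of F x"
  using root_props[OF assms(1), of x] assms root_eq[OF assms(1)] by (meson rtrancl_trans)

lemma root_of_root:
  fixes F :: "('n::finite \<times> 'n) set"
  assumes "forest F" "is_root F r"
  shows "root_of F r = r"
  using root_eq[OF assms(1)] assms(2) by auto

lemma child_eq:
  assumes "forest F" "(j,c) \<in> F" "(c,m) \<in> F\<^sup>*"
  shows "child F j m = c"
proof -
  have sp: "single_parent F" and acy: "acyclic F" using assms(1) by (auto simp: forest_def)
  have no_sibling_below: "False"
    if c12: "(c1,c2) \<in> F\<^sup>*" "c1 \<noteq> c2" and jc: "(j,c1) \<in> F" "(j,c2) \<in> F" for c1 c2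
  proof -
    obtain z where z: "(c1,z) \<in> F\<^sup>*" "(z,c2) \<in> F" using c12 by (auto elim: rtranclE)
    then have "z = j" using single_parent_eq[OF sp z(2) jc(2)] by simp
    then show False using acyclic_no_back_path[OF acy jc(1)] z(1) by simp
  qed
  have unique: "c' = c" if c': "(j,c') \<in> F" "(c',m) \<in> F\<^sup>*" for c'
    using single_parent_comparable[OF sp c'(2) assms(3)] no_sibling_below c' assms(2) by blast
  show ?thesis unfolding child_def
  proof (rule the_equality)
    show "(j,c) \<in> F \<and> (c,m) \<in> F\<^sup>*" using assms(2,3) by simp
  qed (use unique in blast)
qed

lemma cut_arc_separates:
  assumes fo: "forest F" and jc: "(j,c) \<in> F" and cm: "(c,m) \<in> F\<^sup>*"
  shows "(j,m) \<notin> (F - {(j,c)})\<^sup>*"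
proof
  let ?F1 = "F - {(j,c)}"
  assume "(j,m) \<in> ?F1\<^sup>*"
  moreover have "j \<noteq> m" using fo jc cm by (auto simp: forest_def dest: acyclic_no_back_path)
  ultimately have "(j,m) \<in> ?F1\<^sup>+" by (simp add: rtrancl_eq_or_trancl)
  then obtain c' where c': "(j,c') \<in> ?F1" "(c',m) \<in> ?F1\<^sup>*" by (blast dest: tranclD)
  moreover have "?F1\<^sup>* \<subseteq> F\<^sup>*" by (rule rtrancl_mono) blast
  ultimately have "child F j m = c'" using child_eq[OF fo] by blast
  moreover have "child F j m = c" using child_eq[OF fo jc cm] .
  ultimately show False using c'(1) by simp
qed

text \<open>The number of roots complements the number of arcs, since every non-root vertex
  is the head of exactly one arc.\<close>
lemma forest_card:
  fixes F :: "('n::finite \<times> 'n) set"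
  assumes "forest F"
  shows "card F + card {r. is_root F r} = CARD('n)"
proof -
  have sp: "single_parent F" using assms by (simp add: forest_def)
  have "bij_betw snd F (- {r. is_root F r})"
    unfolding bij_betw_def
  proof
    show "inj_on snd F" using sp by (auto simp: inj_on_def single_parent_def)
    show "snd ` F = - {r. is_root F r}" by (force simp: is_root_def)
  qed
  then have "card F = card (- {r. is_root F r})" by (rule bij_betw_same_card)
  moreover have "card (- {r. is_root F r}) + card {r. is_root F r} = CARD('n)"
    by (simp add: Compl_eq_Diff_UNIV card_Diff_subset card_mono)
  ultimately show ?thesis by simp
qed

lemma rtrancl_Diff_arc_into:
  assumes "(x,y) \<in> F\<^sup>*" "(t,y) \<notin> F\<^sup>*"
  shows "(x,y) \<in> (F - {(s,t)})\<^sup>*"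
  using assms
proof (induction rule: rtrancl_induct)
  case base then show ?case by simp
next
  case (step z y)
  have "(t,z) \<notin> F\<^sup>*" using step.prems step.hyps(2) by (meson rtrancl.rtrancl_into_rtrancl)
  then have "(x,z) \<in> (F - {(s,t)})\<^sup>*" using step.IH by simp
  moreover have "(z,y) \<noteq> (s,t)" using step.prems by auto
  ultimately show ?case using step.hyps(2) by (meson DiffI rtrancl.rtrancl_into_rtrancl singletonD)
qed

lemma rtrancl_Diff_arc_from:
  assumes "(x,y) \<in> F\<^sup>*" "(x,s) \<notin> F\<^sup>*"
  shows "(x,y) \<in> (F - {(s,t)})\<^sup>*"
  using assms
proof (induction rule: rtrancl_induct)
  case base then show ?case by simp
next
  case (step z y)
  have "(z,y) \<noteq> (s,t)" using step.prems step.hyps(1) by auto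
  then show ?case using step by (meson DiffI rtrancl.rtrancl_into_rtrancl singletonD)
qed

lemma rtrancl_crossing_arc:
  assumes "(v,r) \<in> R\<^sup>*" "P r" "\<not> P v"
  shows "\<exists>x y. (x,y) \<in> R \<and> \<not> P x \<and> P y \<and> (y,r) \<in> R\<^sup>*"
  using assms
proof (induction rule: converse_rtrancl_induct)
  case base then show ?case by simp
next
  case (step v y)
  then show ?case by (cases "P y") blast+
qed

section \<open>Weak components and out-forests\<close>

lemma weak_comp_refl: "i \<in> weak_comp F i"
  by (simp add: weak_comp_def)

lemma weak_comp_sym_eq:
  assumes "v \<in> weak_comp F i"
  shows "weak_comp F v = weak_comp F i"
proof -
  have sym: "sym ((F \<union> F\<inverse>)\<^sup>*)" by (intro sym_rtrancl) (auto simp: sym_def)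
  have "(i,v) \<in> (F \<union> F\<inverse>)\<^sup>*" using assms by (simp add: weak_comp_def)
  then show ?thesis unfolding weak_comp_def using sym by (auto intro: rtrancl_trans dest: symD)
qed

lemma arc_in_weak_comp:
  assumes "(u,v) \<in> F"
  shows "u \<in> weak_comp F v"
  using assms by (auto simp: weak_comp_def)

lemma weak_comp_eq:
  fixes F :: "('n::finite \<times> 'n) set"
  assumes fo: "forest F"
  shows "weak_comp F i = {v. root_of F v = root_of F i}"
proof
  show "weak_comp F i \<subseteq> {v. root_of F v = root_of F i}"
  proof
    fix v assume "v \<in> weak_comp F i"
    then have "(i,v) \<in> (F \<union> F\<inverse>)\<^sup>*" by (simp add: weak_comp_def)
    then have "root_of F v = root_of F i"
    proof (induction rule: rtrancl_induct)
      case base then show ?case by simp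
    next
      case (step y z)
      then show ?case
        using root_step[OF fo r_into_rtrancl, of y z] root_step[OF fo r_into_rtrancl, of z y] by auto
    qed
    then show "v \<in> {v. root_of F v = root_of F i}" by simp
  qed
next
  show "{v. root_of F v = root_of F i} \<subseteq> weak_comp F i"
  proof
    fix v assume "v \<in> {v. root_of F v = root_of F i}"
    then have v: "root_of F v = root_of F i" by simp
    have "(root_of F i, i) \<in> F\<^sup>*" using root_props[OF fo] by auto
    then have "(i, root_of F i) \<in> (F \<union> F\<inverse>)\<^sup>*"
      by (meson rtrancl_converseI Un_upper2 rtrancl_mono subsetD)
    moreover have "(root_of F i, v) \<in> (F \<union> F\<inverse>)\<^sup>*"
      using root_props(2)[OF fo, of v] v by (metis Un_upper1 rtrancl_mono subsetD)
    ultimately show "v \<in> weak_comp F i" by (simp add: weak_comp_def)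
  qed
qed

lemma in_tree_iff:
  fixes F :: "('n::finite \<times> 'n) set"
  assumes fo: "forest F"
  shows "in_tree_rooted_at F i j \<longleftrightarrow> root_of F i = j"
proof
  assume H: "in_tree_rooted_at F i j"
  have "root_of F i \<in> weak_comp F i"
    using weak_comp_eq[OF fo] root_of_root[OF fo root_props(1)[OF fo]] by simp
  then have "(j, root_of F i) \<in> F\<^sup>*" using H by (simp add: in_tree_rooted_at_def)
  then show "root_of F i = j" using is_root_rtrancl root_props(1)[OF fo] by metis
next
  assume H: "root_of F i = j"
  have "root_of F j = j" using H root_of_root[OF fo root_props(1)[OF fo]] by metis
  then have "j \<in> weak_comp F i" using weak_comp_eq[OF fo] H by simp
  moreover have "(j,v) \<in> F\<^sup>*" if "v \<in> weak_comp F i" for v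
    using that weak_comp_eq[OF fo, of i] H root_props(2)[OF fo, of v] by auto
  ultimately show "in_tree_rooted_at F i j" by (simp add: in_tree_rooted_at_def)
qed

lemma rooted_acyclic:
  assumes sp: "single_parent F" and rt: "\<And>v. \<exists>r. is_root F r \<and> (r,v) \<in> F\<^sup>*"
  shows "acyclic F"
proof -
  have "(x,x) \<notin> F\<^sup>+" if "is_root F r" "(r,x) \<in> F\<^sup>*" for r x
    using that(2)
  proof (induction rule: rtrancl_induct)
    case base
    then show ?case using that(1) by (auto elim: tranclE simp: is_root_def)
  next
    case (step x y)
    show ?case
    proof
      assume "(y,y) \<in> F\<^sup>+"
      then obtain c where "(y,c) \<in> F\<^sup>*" "(c,y) \<in> F" by (meson tranclD2)
      then have "(y,x) \<in> F\<^sup>*" using single_parent_eq[OF sp step.hyps(2)] by blast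
      then have "(x,x) \<in> F\<^sup>+" using step.hyps(2) by (meson rtrancl_into_trancl2)
      then show False using step.IH by simp
    qed
  qed
  then show ?thesis unfolding acyclic_def using rt by blast
qed

text \<open>A diverging tree on a weak component: its arcs have distinct heads and its root
  has no parent at all (because the component contains all neighbours).\<close>
lemma diverging_tree_component:
  fixes F :: "('n::finite \<times> 'n) set"
  assumes dt: "diverging_tree (weak_comp F i) (F \<inter> (weak_comp F i \<times> weak_comp F i))"
  shows "inj_on snd (F \<inter> (weak_comp F i \<times> weak_comp F i))"
    and "\<exists>r\<in>weak_comp F i. is_root F r \<and> (\<forall>v\<in>weak_comp F i. (r,v) \<in> F\<^sup>*)"
proof -
  let ?C = "weak_comp F i"
  let ?T = "F \<inter> (?C \<times> ?C)"
  obtain r where r: "r \<in> ?C" "\<forall>v\<in>?C. (r,v) \<in> ?T\<^sup>*" and cT: "card ?T + 1 = card ?C"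
    and TC: "?T \<subseteq> ?C \<times> ?C"
    using dt unfolding diverging_tree_def by blast
  have fin: "finite ?C" "finite ?T" by simp_all
  have sup: "?C - {r} \<subseteq> snd ` ?T"
  proof
    fix x assume x: "x \<in> ?C - {r}"
    then have "(r,x) \<in> ?T\<^sup>*" using r by auto
    then obtain y where "(y,x) \<in> ?T" using x by (auto elim: rtranclE)
    then show "x \<in> snd ` ?T" by force
  qed
  have c1: "card (?C - {r}) = card ?T" using cT r(1) fin by simp
  have "card (?C - {r}) \<le> card (snd ` ?T)" using sup fin by (intro card_mono) auto
  then have eqc: "card (snd ` ?T) = card ?T" using c1 card_image_le[OF fin(2), of snd] by simp
  then show "inj_on snd ?T" using fin by (simp add: eq_card_imp_inj_on)
  have heads: "snd ` ?T = ?C - {r}"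
    using sup eqc c1 fin by (intro card_subset_eq[symmetric]) auto
  have "is_root F r"
    unfolding is_root_def
  proof (intro allI notI)
    fix u assume "(u,r) \<in> F"
    then have "u \<in> weak_comp F r" by (rule arc_in_weak_comp)
    then have "u \<in> ?C" using weak_comp_sym_eq[OF r(1)] by simp
    then have "(u,r) \<in> ?T" using \<open>(u,r) \<in> F\<close> r(1) by simp
    then show False using heads by force
  qed
  moreover have "\<forall>v\<in>?C. (r,v) \<in> F\<^sup>*" using r(2) by (meson Int_lower1 rtrancl_mono subsetD)
  ultimately show "\<exists>r\<in>?C. is_root F r \<and> (\<forall>v\<in>?C. (r,v) \<in> F\<^sup>*)" using r(1) by blast
qed

lemma forest_component_diverging:
  fixes F :: "('n::finite \<times> 'n) set"
  assumes fo: "forest F"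
  shows "diverging_tree (weak_comp F i) (F \<inter> (weak_comp F i \<times> weak_comp F i))"
proof -
  let ?r = "root_of F i"
  define C where "C = weak_comp F i"
  have C: "C = {v. root_of F v = ?r}" using weak_comp_eq[OF fo] C_def by simp
  have rC: "?r \<in> C" using C root_of_root[OF fo root_props(1)[OF fo]] by simp
  have sp: "single_parent F" using fo by (simp add: forest_def)
  have np: "is_root F ?r" using root_props[OF fo] by simp
  let ?T = "F \<inter> (C \<times> C)"
  have "bij_betw snd ?T (C - {?r})"
    unfolding bij_betw_def
  proof
    show "inj_on snd ?T" using sp by (auto simp: inj_on_def single_parent_def)
    show "snd ` ?T = C - {?r}"
    proof
      show "snd ` ?T \<subseteq> C - {?r}" using np by (auto simp: is_root_def)
      show "C - {?r} \<subseteq> snd ` ?T"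
      proof
        fix v assume v: "v \<in> C - {?r}"
        then have "(?r, v) \<in> F\<^sup>*" using C root_props(2)[OF fo, of v] by auto
        then obtain u where u: "(u,v) \<in> F" using v by (auto elim: rtranclE)
        then have "root_of F u = ?r" using root_step[OF fo r_into_rtrancl[OF u]] v C by auto
        then have "(u,v) \<in> ?T" using u v C by auto
        then show "v \<in> snd ` ?T" by force
      qed
    qed
  qed
  then have "card ?T = card (C - {?r})" by (rule bij_betw_same_card)
  moreover have "card C > 0" using rC by (auto simp: card_gt_0_iff)
  ultimately have card: "card ?T + 1 = card C" using rC by (simp add: card_Diff_singleton)
  have reach: "(?r, v) \<in> ?T\<^sup>*" if "v \<in> C" for v
  proof -
    have "(?r, v) \<in> F\<^sup>*" using that C root_props(2)[OF fo, of v] by auto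
    then show ?thesis
    proof (induction rule: rtrancl_induct)
      case base then show ?case by simp
    next
      case (step y z)
      have "root_of F y = ?r" using root_step[OF fo step.hyps(1)] root_of_root[OF fo np] by simp
      moreover have "root_of F z = ?r" using root_step[OF fo, of y z] step.hyps(2) calculation by auto
      ultimately have "(y,z) \<in> ?T" using step.hyps(2) C by auto
      then show ?case using step.IH by (meson rtrancl.rtrancl_into_rtrancl)
    qed
  qed
  show ?thesis unfolding diverging_tree_def C_def[symmetric] using card rC reach by blast
qed

lemma out_forest_iff:
  fixes a :: "real^'n^'n" and F :: "('n \<times> 'n) set"
  shows "out_forest a F \<longleftrightarrow> F \<subseteq> arcs a \<and> forest F"
proof
  assume H: "out_forest a F"
  then have dt: "diverging_tree (weak_comp F i) (F \<inter> (weak_comp F i \<times> weak_comp F i))" for i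
    by (simp add: out_forest_def)
  have sp: "single_parent F"
    unfolding single_parent_def
  proof (intro allI impI)
    fix u u' v assume uv: "(u,v) \<in> F" "(u',v) \<in> F"
    then have "(u,v) \<in> F \<inter> (weak_comp F v \<times> weak_comp F v)"
      "(u',v) \<in> F \<inter> (weak_comp F v \<times> weak_comp F v)"
      using arc_in_weak_comp weak_comp_refl by fast+
    then show "u = u'" using inj_onD[OF diverging_tree_component(1)[OF dt]] by fastforce
  qed
  have "\<exists>r. is_root F r \<and> (r,v) \<in> F\<^sup>*" for v
    using diverging_tree_component(2)[OF dt, of v] weak_comp_refl[of v F] by blast
  then show "F \<subseteq> arcs a \<and> forest F"
    using H sp rooted_acyclic[OF sp] by (simp add: forest_def out_forest_def)
next
  assume "F \<subseteq> arcs a \<and> forest F"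
  then show "out_forest a F" by (simp add: out_forest_def forest_component_diverging)
qed

lemma num_trees_eq:
  fixes F :: "('n::finite \<times> 'n) set"
  assumes fo: "forest F"
  shows "num_trees F = card {r. is_root F r}"
proof -
  have "range (weak_comp F) = weak_comp F ` {r. is_root F r}"
  proof
    show "range (weak_comp F) \<subseteq> weak_comp F ` {r. is_root F r}"
    proof
      fix C assume "C \<in> range (weak_comp F)"
      then obtain i where C: "C = weak_comp F i" by auto
      have "weak_comp F i = weak_comp F (root_of F i)"
        using weak_comp_eq[OF fo] root_of_root[OF fo root_props(1)[OF fo]] by simp
      then show "C \<in> weak_comp F ` {r. is_root F r}" using C root_props(1)[OF fo] by blast
    qed
  qed auto
  moreover have "inj_on (weak_comp F) {r. is_root F r}"
  proof
    fix r1 r2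
    assume r: "r1 \<in> {r. is_root F r}" "r2 \<in> {r. is_root F r}" "weak_comp F r1 = weak_comp F r2"
    then have "r1 \<in> weak_comp F r2" using weak_comp_refl by metis
    then have "root_of F r1 = root_of F r2" using weak_comp_eq[OF fo] by simp
    then show "r1 = r2" using r root_of_root[OF fo] by simp
  qed
  ultimately show ?thesis unfolding num_trees_def by (simp add: card_image)
qed

section \<open>Maximum out-forests\<close>

lemma forest_replace_parent:
  fixes F :: "('n::finite \<times> 'n) set"
  assumes fo: "forest F" and pv: "(p,v) \<in> F" and vu: "(v,u) \<notin> F\<^sup>*"
  shows "forest (insert (u,v) (F - {(p,v)}))" "card (insert (u,v) (F - {(p,v)})) = card F"
proof -
  let ?F0 = "F - {(p,v)}"
  have root: "is_root ?F0 v"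
    using fo pv by (auto simp: is_root_def forest_def single_parent_def)
  have "(v,u) \<notin> ?F0\<^sup>*" using vu rtrancl_mono[of ?F0 F] by blast
  then show "forest (insert (u,v) ?F0)"
    using forest_insert_root_arc[OF forest_mono[OF fo] root] by blast
  show "card (insert (u,v) ?F0) = card F"
    using card_replace_arc pv root by (metis is_root_def)
qed

text \<open>Repeatedly moving the arc entering the tree
  of r on a path from v shrinks that tree until an arc can be attached to r itself.\<close>
lemma augment_forest:
  fixes a :: "real^'n^'n"
  assumes "F \<subseteq> arcs a" "forest F" "is_root F r" "(v,r) \<in> (arcs a)\<^sup>*" "(r,v) \<notin> F\<^sup>*"
  shows "\<exists>G. G \<subseteq> arcs a \<and> forest G \<and> card G > card F"
  using assms
proof (induction "card {x. (r,x) \<in> F\<^sup>*}" arbitrary: F v rule: less_induct)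
  case less
  obtain x y where xy: "(x,y) \<in> arcs a" "(r,x) \<notin> F\<^sup>*" "(r,y) \<in> F\<^sup>*" "(y,r) \<in> (arcs a)\<^sup>*"
    using rtrancl_crossing_arc[OF less.prems(4), of "\<lambda>z. (r,z) \<in> F\<^sup>*"] less.prems(5) by auto
  have yx: "(y,x) \<notin> F\<^sup>*" using xy(2,3) by (meson rtrancl_trans)
  show ?case
  proof (cases "y = r")
    case True
    let ?G = "insert (x,r) F"
    have "(x,r) \<notin> F" using less.prems(3) by (simp add: is_root_def)
    then have "card ?G = card F + 1" by (simp add: card_insert_if)
    moreover have "forest ?G" using forest_insert_root_arc[OF less.prems(2,3)] yx True by simp
    moreover have "?G \<subseteq> arcs a" using xy(1) True less.prems(1) by simp
    ultimately show ?thesis by (intro exI[of _ ?G]) simp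
  next
    case False
    obtain p where p: "(p,y) \<in> F" using xy(3) False by (auto elim: rtranclE)
    define G where "G = insert (x,y) (F - {(p,y)})"
    have foG: "forest G" and cardG: "card G = card F"
      using forest_replace_parent[OF less.prems(2) p yx] by (simp_all add: G_def)
    have GA: "G \<subseteq> arcs a" using less.prems(1) xy(1) by (auto simp: G_def)
    have rootG: "is_root G r" using less.prems(3) False by (auto simp: is_root_def G_def)
    have reachG: "(r,z) \<in> F\<^sup>*" if "(r,z) \<in> G\<^sup>*" for z
      using that
    proof (induction rule: rtrancl_induct)
      case (step w z)
      then show ?case using xy(2) by (cases "(w,z) = (x,y)") (auto simp: G_def intro: rtrancl_into_rtrancl)
    qed simp
    have ryG: "(r,y) \<notin> G\<^sup>*"
    proof
      assume "(r,y) \<in> G\<^sup>*"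
      then obtain w where w: "(r,w) \<in> G\<^sup>*" "(w,y) \<in> G" using False by (auto elim: rtranclE)
      have "single_parent G" "(x,y) \<in> G" using foG by (simp_all add: G_def forest_def)
      then have "w = x" using single_parent_eq w(2) by metis
      then show False using reachG[OF w(1)] xy(2) by simp
    qed
    have "{z. (r,z) \<in> G\<^sup>*} \<subset> {z. (r,z) \<in> F\<^sup>*}" using reachG ryG xy(3) by auto
    then have "card {z. (r,z) \<in> G\<^sup>*} < card {z. (r,z) \<in> F\<^sup>*}"
      by (rule psubset_card_mono[rotated]) simp
    then show ?thesis using less.hyps[OF _ GA foG rootG xy(4) ryG] cardG by auto
  qed
qed

lemma arcs_ne: "(u,v) \<in> arcs a \<Longrightarrow> u \<noteq> v"
  by (simp add: arcs_def)

lemma max_forest_iff: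
  "max_out_forest a F \<longleftrightarrow>
     F \<subseteq> arcs a \<and> forest F \<and> (\<forall>G. G \<subseteq> arcs a \<and> forest G \<longrightarrow> card G \<le> card F)"
  by (simp add: max_out_forest_def out_forest_iff)

lemma max_out_forest_exists:
  fixes a :: "real^'n^'n"
  shows "\<exists>F. max_out_forest a F"
proof -
  let ?S = "{F. out_forest a F}"
  have fin: "finite (card ` ?S)" by simp
  have "{} \<in> ?S" by (simp add: out_forest_iff forest_def single_parent_def acyclic_def)
  then have ne: "card ` ?S \<noteq> {}" by blast
  obtain F where "F \<in> ?S" "card F = Max (card ` ?S)" using Max_in[OF fin ne] by auto
  moreover have "card G \<le> Max (card ` ?S)" if "G \<in> ?S" for G using Max_ge[OF fin] that by simp
  ultimately show ?thesis by (auto simp: max_out_forest_def)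
qed

lemma max_forest_root_reaches:
  fixes a :: "real^'n^'n"
  assumes "max_out_forest a F" "is_root F r" "(v,r) \<in> (arcs a)\<^sup>*"
  shows "(r,v) \<in> F\<^sup>*"
proof (rule ccontr)
  assume "(r,v) \<notin> F\<^sup>*"
  then obtain G where "G \<subseteq> arcs a" "forest G" "card G > card F"
    using augment_forest[of F a r v] assms by (auto simp: max_forest_iff)
  then show False using assms(1) by (auto simp: max_forest_iff)
qed

lemma weight_insert:
  fixes a :: "real^'n^'n"
  shows "e \<notin> F \<Longrightarrow> weight a (insert e F) = a $ snd e $ fst e * weight a F"
  unfolding weight_def by (cases e) (simp add: prod.insert)

lemma weight_replace_arc:
  fixes a :: "real^'n^'n"
  assumes "(p,v) \<in> F" "(u,w) \<notin> F - {(p,v)}"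
  shows "a $ v $ p * weight a (insert (u,w) (F - {(p,v)})) = a $ w $ u * weight a F"
proof -
  have "weight a F = a $ v $ p * weight a (F - {(p,v)})"
    using weight_insert[of "(p,v)" "F - {(p,v)}" a] assms(1) by (simp add: insert_absorb)
  then show ?thesis using weight_insert[OF assms(2), of a] by (simp add: algebra_simps)
qed

lemma weight_pos:
  fixes a :: "real^'n^'n"
  shows "F \<subseteq> arcs a \<Longrightarrow> weight a F > 0"
  unfolding weight_def by (intro prod_pos) (auto simp: arcs_def)

lemma weight_split:
  fixes a :: "real^'n^'n"
  shows "weight a A = weight a {e\<in>A. snd e \<notin> K} * weight a {e\<in>A. snd e \<in> K}"
proof -
  have "A = {e\<in>A. snd e \<notin> K} \<union> {e\<in>A. snd e \<in> K}" by auto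
  then have "weight a A = weight a ({e\<in>A. snd e \<notin> K} \<union> {e\<in>A. snd e \<in> K})" by simp
  also have "\<dots> = weight a {e\<in>A. snd e \<notin> K} * weight a {e\<in>A. snd e \<in> K}"
    unfolding weight_def by (rule prod.union_disjoint) auto
  finally show ?thesis .
qed

text \<open>The weighted digraph; nonnegativity of the weights means that the arcs of the
  digraph are exactly the positions of the nonzero off-diagonal weights.\<close>
locale weighted_digraph =
  fixes a :: "real^'n^'n"
  assumes nonneg: "\<And>i j. i \<noteq> j \<Longrightarrow> a $ i $ j \<ge> 0"
begin

definition "max_forests = {F. max_out_forest a F}"
definition "total_weight = (\<Sum>F\<in>max_forests. weight a F)"
definition "root_weight i j = (\<Sum>F\<in>max_forests. if root_of F i = j then weight a F else 0)"

lemma weight_zero_off_arcs: "k \<noteq> i \<Longrightarrow> (k,i) \<notin> arcs a \<Longrightarrow> a $ i $ k = 0"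
  using nonneg[of i k] by (auto simp: arcs_def)

lemma max_forests_props:
  assumes "F \<in> max_forests"
  shows "F \<subseteq> arcs a" "forest F" "max_out_forest a F" "single_parent F" "acyclic F"
  using assms by (auto simp: max_forests_def max_forest_iff forest_def)

lemma max_forests_card: "F \<in> max_forests \<Longrightarrow> G \<in> max_forests \<Longrightarrow> card F = card G"
  by (auto simp: max_forests_def max_forest_iff intro: antisym)

lemma max_forests_intro:
  "F \<in> max_forests \<Longrightarrow> G \<subseteq> arcs a \<Longrightarrow> forest G \<Longrightarrow> card G = card F \<Longrightarrow> G \<in> max_forests"
  by (auto simp: max_forests_def max_forest_iff)

lemma root_reaches:
  "F \<in> max_forests \<Longrightarrow> is_root F r \<Longrightarrow> (v,r) \<in> (arcs a)\<^sup>* \<Longrightarrow> (r,v) \<in> F\<^sup>*"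
  using max_forest_root_reaches max_forests_props(3) by blast

lemma total_weight_pos: "total_weight > 0"
proof -
  obtain F where "F \<in> max_forests" using max_out_forest_exists by (auto simp: max_forests_def)
  then show ?thesis unfolding total_weight_def using max_forests_props(1)
    by (intro sum_pos2[of _ F]) (auto intro: less_imp_le weight_pos)
qed

lemma norm_max_out_forest_entry:
  "norm_max_out_forest_matrix a $ i $ j = root_weight i j / total_weight"
proof -
  have "{F. max_out_forest a F \<and> in_tree_rooted_at F i j} = {F\<in>max_forests. root_of F i = j}"
    using in_tree_iff max_forests_props(2) by (auto simp: max_forests_def)
  moreover have "(\<Sum>F\<in>{F\<in>max_forests. root_of F i = j}. weight a F) = root_weight i j"
    unfolding root_weight_def by (rule sum.inter_filter) simp
  ultimately show ?thesis
    by (simp add: norm_max_out_forest_matrix_def total_weight_def max_forests_def)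
qed

end

section \<open>Row balance: reattaching subtrees\<close>

context weighted_digraph
begin

lemma sum_in_arcs: "(\<Sum>k\<in>UNIV-{i}. a$i$k * f k) = (\<Sum>k\<in>{k. (k,i) \<in> arcs a}. a$i$k * f k)"
  by (rule sum.mono_neutral_right) (auto simp: weight_zero_off_arcs dest: arcs_ne)

lemma sum_out_arcs: "(\<Sum>k\<in>UNIV-{j}. a$k$j * f k) = (\<Sum>k\<in>{k. (j,k) \<in> arcs a}. a$k$j * f k)"
  by (rule sum.mono_neutral_right) (auto simp: weight_zero_off_arcs dest: arcs_ne)

lemma root_weight_pair_sum:
  "(\<Sum>k\<in>P. c k * root_weight (v k) (w k)) =
     (\<Sum>x\<in>max_forests \<times> P. if root_of (fst x) (v (snd x)) = w (snd x)
                                then c (snd x) * weight a (fst x) else 0)"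
proof -
  have "(\<Sum>k\<in>P. c k * root_weight (v k) (w k)) =
      (\<Sum>k\<in>P. \<Sum>F\<in>max_forests. if root_of F (v k) = w k then c k * weight a F else 0)"
    unfolding root_weight_def by (simp add: sum_distrib_left if_distrib cong: if_cong)
  also have "\<dots> = (\<Sum>F\<in>max_forests. \<Sum>k\<in>P. if root_of F (v k) = w k then c k * weight a F else 0)"
    by (rule sum.swap)
  also have "\<dots> = (\<Sum>x\<in>max_forests \<times> P. if root_of (fst x) (v (snd x)) = w (snd x)
                                then c (snd x) * weight a (fst x) else 0)"
    by (simp add: sum.cartesian_product case_prod_beta)
  finally show ?thesis .
qed

lemma reattach:
  assumes FM: "F \<in> max_forests" and ki: "(k,i) \<in> arcs a" and nk: "(i,k) \<notin> F\<^sup>*"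
    and p: "(p,i) \<in> F"
  defines "F' \<equiv> insert (k,i) (F - {(p,i)})"
  shows "F' \<in> max_forests" "(p,i) \<in> arcs a" "(k,i) \<in> F'" "(i,p) \<notin> F'\<^sup>*"
    "insert (p,i) (F' - {(k,i)}) = F" "root_of F' i = root_of F k"
    "a$i$p * weight a F' = a$i$k * weight a F"
proof -
  have sp: "single_parent F" and acy: "acyclic F" and FA: "F \<subseteq> arcs a" and fo: "forest F"
    using max_forests_props[OF FM] by auto
  have kF0: "(k,i) \<notin> F - {(p,i)}" using single_parent_eq[OF sp _ p] by auto
  have foF': "forest F'" and cF': "card F' = card F"
    using forest_replace_parent[OF fo p nk] by (simp_all add: F'_def)
  show "F' \<in> max_forests" using max_forests_intro[OF FM _ foF' cF'] FA ki by (auto simp: F'_def)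
  show "(p,i) \<in> arcs a" using FA p by auto
  show kiF': "(k,i) \<in> F'" by (simp add: F'_def)
  have reach: "(i,z) \<in> F\<^sup>*" if "(i,z) \<in> F'\<^sup>*" for z
    using that
  proof (induction rule: rtrancl_induct)
    case (step w z)
    then show ?case using nk by (cases "(w,z) = (k,i)") (auto simp: F'_def intro: rtrancl_into_rtrancl)
  qed simp
  show "(i,p) \<notin> F'\<^sup>*" using reach acyclic_no_back_path[OF acy p] by blast
  show "insert (p,i) (F' - {(k,i)}) = F" using kF0 p by (auto simp: F'_def)
  show "root_of F' i = root_of F k"
  proof -
    let ?r = "root_of F k"
    have np: "is_root F ?r" and rk: "(?r,k) \<in> F\<^sup>*" using root_props[OF fo] by auto
    have "?r \<noteq> i" using np p by (auto simp: is_root_def)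
    then have npF': "is_root F' ?r" using np by (auto simp: is_root_def F'_def)
    have "(?r,k) \<in> (F - {(p,i)})\<^sup>*" by (rule rtrancl_Diff_arc_into[OF rk nk])
    then have "(?r,k) \<in> F'\<^sup>*" using rtrancl_mono[of "F - {(p,i)}" F'] by (auto simp: F'_def)
    then have "(?r,i) \<in> F'\<^sup>*" using kiF' by (meson rtrancl.rtrancl_into_rtrancl)
    then show ?thesis using root_eq[OF foF'] npF' by blast
  qed
  show "a$i$p * weight a F' = a$i$k * weight a F"
    unfolding F'_def by (rule weight_replace_arc[OF p kF0])
qed

text \<open>Pairs (F,k) with k below i contribute equally to both sides; the others are matched
  by the reattachment involution.\<close>
lemma root_weight_row_balance:
  "(\<Sum>k\<in>UNIV-{i}. a$i$k) * root_weight i j = (\<Sum>k\<in>UNIV-{i}. a$i$k * root_weight k j)"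
proof -
  define P where "P = {k. (k,i) \<in> arcs a}"
  define g where "g = (\<lambda>(F,k). if root_of F i = j then a$i$k * weight a F else 0)"
  define h where "h = (\<lambda>(F,k). if root_of F k = j then a$i$k * weight a F else 0)"
  have L: "(\<Sum>k\<in>UNIV-{i}. a$i$k) * root_weight i j = (\<Sum>x\<in>max_forests\<times>P. g x)"
    using sum_in_arcs[of i "\<lambda>_. root_weight i j"]
      root_weight_pair_sum[of "\<lambda>k. a$i$k" "\<lambda>_. i" "\<lambda>_. j" P]
    by (simp add: sum_distrib_right P_def g_def case_prod_beta)
  have R: "(\<Sum>k\<in>UNIV-{i}. a$i$k * root_weight k j) = (\<Sum>x\<in>max_forests\<times>P. h x)"
    using sum_in_arcs[of i "\<lambda>k. root_weight k j"]
      root_weight_pair_sum[of "\<lambda>k. a$i$k" "\<lambda>k. k" "\<lambda>_. j" P]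
    by (simp add: P_def h_def case_prod_beta)
  define \<sigma> where "\<sigma> = (\<lambda>(F,k). if (i,k) \<in> F\<^sup>* then (F,k)
      else (insert (k,i) (F - {(parent F i, i)}), parent F i))"
  have invol: "\<sigma> x \<in> max_forests\<times>P \<and> \<sigma> (\<sigma> x) = x \<and> g (\<sigma> x) = h x" if x: "x \<in> max_forests\<times>P" for x
  proof -
    obtain F k where xFk: "x = (F,k)" and FM: "F \<in> max_forests" and kP: "(k,i) \<in> arcs a"
      using x by (auto simp: P_def)
    have fo: "forest F" using max_forests_props[OF FM] by auto
    show ?thesis
    proof (cases "(i,k) \<in> F\<^sup>*")
      case True
      then have "root_of F k = root_of F i" using root_step[OF fo] by blast
      then show ?thesis using True x by (simp add: xFk \<sigma>_def g_def h_def)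
    next
      case False
      have "\<not> is_root F i" using False root_reaches[OF FM _ r_into_rtrancl[OF kP]] by blast
      then obtain p where p: "(p,i) \<in> F" by (auto simp: is_root_def)
      have parp: "parent F i = p" using parent_eq[OF max_forests_props(4)[OF FM] p] .
      define F' where "F' = insert (k,i) (F - {(p,i)})"
      note sw = reattach[OF FM kP False p, folded F'_def]
      have sx: "\<sigma> x = (F', p)" using False parp by (simp add: xFk \<sigma>_def F'_def)
      have "parent F' i = k" using parent_eq[OF max_forests_props(4)[OF sw(1)] sw(3)] .
      then have "\<sigma> (F',p) = (F,k)" using sw(4,5) by (simp add: \<sigma>_def)
      moreover have "\<sigma> x \<in> max_forests\<times>P" using sx sw(1,2) by (simp add: P_def)
      moreover have "g (\<sigma> x) = h x" using sx sw(6,7) by (simp add: g_def h_def xFk)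
      ultimately show ?thesis using sx xFk by simp
    qed
  qed
  have "(\<Sum>x\<in>max_forests\<times>P. h x) = (\<Sum>x\<in>max_forests\<times>P. g x)"
    by (rule sum.reindex_bij_witness[of _ \<sigma> \<sigma>]) (use invol in auto)
  then show ?thesis using L R by simp
qed

end

section \<open>Column balance: rerooting trees\<close>

context weighted_digraph
begin

lemma reroot_forward:
  assumes FM: "F \<in> max_forests" and rt: "root_of F i = j" and mj: "(m,j) \<in> arcs a"
  defines "c \<equiv> child F j m"
  defines "G \<equiv> insert (m,j) (F - {(j,c)})"
  shows "G \<in> max_forests" "(j,c) \<in> arcs a" "root_of G i = c" "parent G j = m"
    "insert (j,c) (G - {(m,j)}) = F" "a$j$m * weight a F = a$c$j * weight a G"
proof -
  have acy: "acyclic F" and FA: "F \<subseteq> arcs a" and fo: "forest F"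
    using max_forests_props[OF FM] by auto
  have np: "is_root F j" and ji: "(j,i) \<in> F\<^sup>*" using root_eq[OF fo] rt by auto
  have jm: "(j,m) \<in> F\<^sup>+"
    using root_reaches[OF FM np r_into_rtrancl[OF mj]] arcs_ne[OF mj] by (simp add: rtrancl_eq_or_trancl)
  then obtain c' where c': "(j,c') \<in> F" "(c',m) \<in> F\<^sup>*" by (blast dest: tranclD)
  have jc: "(j,c) \<in> F" and cm: "(c,m) \<in> F\<^sup>*" using c' child_eq[OF fo c'] c_def by auto
  define F1 where "F1 = F - {(j,c)}"
  have root1: "is_root F1 j" using np by (auto simp: is_root_def F1_def)
  have cj: "(c,j) \<notin> F\<^sup>*" using acyclic_no_back_path[OF acy jc] .
  have "(j,m) \<notin> F1\<^sup>*" unfolding F1_def by (rule cut_arc_separates[OF fo jc cm])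
  then have foG: "forest G"
    using forest_insert_root_arc[OF forest_mono[OF fo] root1] by (simp add: G_def F1_def)
  have mF1: "(m,j) \<notin> F1" using root1 by (simp add: is_root_def)
  have cG: "card G = card F" using card_replace_arc[OF jc mF1[unfolded F1_def]] by (simp add: G_def)
  show "G \<in> max_forests" using max_forests_intro[OF FM _ foG cG] FA mj by (auto simp: G_def)
  show "(j,c) \<in> arcs a" using FA jc by auto
  have mjG: "(m,j) \<in> G" by (simp add: G_def)
  show "root_of G i = c"
  proof -
    have "(u,c) \<notin> G" for u
      using single_parent_eq[OF max_forests_props(4)[OF FM] _ jc, of u] acyclic_no_back_path[OF acy jc]
      by (auto simp: G_def)
    then have rootG: "is_root G c" by (simp add: is_root_def)
    have "(c,m) \<in> F1\<^sup>*" unfolding F1_def by (rule rtrancl_Diff_arc_from[OF cm cj])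
    moreover have "F1 \<subseteq> G" by (auto simp: G_def F1_def)
    ultimately have "(c,m) \<in> G\<^sup>*" using rtrancl_mono by blast
    then have cjG: "(c,j) \<in> G\<^sup>*" using mjG by (meson rtrancl.rtrancl_into_rtrancl)
    have "(c,v) \<in> G\<^sup>*" if "(j,v) \<in> F\<^sup>*" for v
      using that
    proof (induction rule: rtrancl_induct)
      case (step v y)
      then show ?case by (cases "(v,y) = (j,c)") (auto simp: G_def intro: rtrancl_into_rtrancl)
    qed (rule cjG)
    then show ?thesis using root_eq[OF foG] rootG ji by blast
  qed
  show "parent G j = m" using parent_eq[OF _ mjG] foG by (simp add: forest_def)
  show "insert (j,c) (G - {(m,j)}) = F" using mF1 jc by (auto simp: G_def F1_def)
  show "a$j$m * weight a F = a$c$j * weight a G"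
    using weight_replace_arc[where a=a, OF jc mF1[unfolded F1_def]] by (simp add: G_def)
qed

lemma reroot_backward:
  assumes GM: "G \<in> max_forests" and rt: "root_of G i = k" and jk: "(j,k) \<in> arcs a"
  defines "p \<equiv> parent G j"
  defines "F \<equiv> insert (j,k) (G - {(p,j)})"
  shows "F \<in> max_forests" "(p,j) \<in> arcs a" "root_of F i = j" "child F j p = k"
    "insert (p,j) (F - {(j,k)}) = G"
proof -
  have sp: "single_parent G" and acy: "acyclic G" and GA: "G \<subseteq> arcs a" and fo: "forest G"
    using max_forests_props[OF GM] by auto
  have np: "is_root G k" and ki: "(k,i) \<in> G\<^sup>*" using root_eq[OF fo] rt by auto
  have jnk: "j \<noteq> k" using arcs_ne[OF jk] .
  have "(k,j) \<in> G\<^sup>+"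
    using root_reaches[OF GM np r_into_rtrancl[OF jk]] jnk by (simp add: rtrancl_eq_or_trancl)
  then obtain p' where p': "(k,p') \<in> G\<^sup>*" "(p',j) \<in> G" by (blast dest: tranclD2)
  have pj: "(p,j) \<in> G" and kp: "(k,p) \<in> G\<^sup>*" using p' parent_eq[OF sp p'(2)] p_def by auto
  define G1 where "G1 = G - {(p,j)}"
  have rootk: "is_root G1 k" using np by (auto simp: is_root_def G1_def)
  have rootj: "is_root G1 j" using single_parent_eq[OF sp _ pj] by (auto simp: is_root_def G1_def)
  have "(k,j) \<notin> G1\<^sup>*" using is_root_rtrancl[OF rootj] jnk by blast
  then have foF: "forest F"
    using forest_insert_root_arc[OF forest_mono[OF fo] rootk] by (simp add: F_def G1_def)
  have jkG1: "(j,k) \<notin> G1" using rootk by (simp add: is_root_def)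
  have cF: "card F = card G" using card_replace_arc[OF pj jkG1[unfolded G1_def]] by (simp add: F_def)
  show "F \<in> max_forests" using max_forests_intro[OF GM _ foF cF] GA jk by (auto simp: F_def)
  show "(p,j) \<in> arcs a" using GA pj by auto
  have jkF: "(j,k) \<in> F" by (simp add: F_def)
  show "root_of F i = j"
  proof -
    have rootF: "is_root F j" using rootj jnk by (auto simp: is_root_def F_def G1_def)
    have "(j,v) \<in> F\<^sup>*" if "(k,v) \<in> G\<^sup>*" for v
      using that
    proof (induction rule: rtrancl_induct)
      case (step v y)
      then show ?case by (cases "(v,y) = (p,j)") (auto simp: F_def intro: rtrancl_into_rtrancl)
    qed (use jkF in auto)
    then show ?thesis using root_eq[OF foF] rootF ki by blast
  qed
  show "child F j p = k"
  proof -
    have "(k,p) \<in> G1\<^sup>*"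
      unfolding G1_def by (rule rtrancl_Diff_arc_into[OF kp acyclic_no_back_path[OF acy pj]])
    moreover have "G1 \<subseteq> F" by (auto simp: F_def G1_def)
    ultimately have "(k,p) \<in> F\<^sup>*" using rtrancl_mono by blast
    then show ?thesis using child_eq[OF foF jkF] by simp
  qed
  have "F - {(j,k)} = G1" unfolding F_def G1_def[symmetric] by (rule Diff_insert_absorb[OF jkG1])
  moreover have "insert (p,j) G1 = G" using pj by (auto simp: G1_def)
  ultimately show "insert (p,j) (F - {(j,k)}) = G" by simp
qed

text \<open>The two rerootings are mutually inverse
  bijections between the pairs counted on both sides.\<close>
lemma root_weight_column_balance:
  "root_weight i j * (\<Sum>m\<in>UNIV-{j}. a$j$m) = (\<Sum>k\<in>UNIV-{j}. root_weight i k * a$k$j)"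
proof -
  define Pin where "Pin = {m. (m,j) \<in> arcs a}"
  define Pout where "Pout = {k. (j,k) \<in> arcs a}"
  define SL where "SL = {x \<in> max_forests\<times>Pin. root_of (fst x) i = j}"
  define SR where "SR = {x \<in> max_forests\<times>Pout. root_of (fst x) i = snd x}"
  define gL where "gL = (\<lambda>x. a$j$(snd x) * weight a (fst x))"
  define gR where "gR = (\<lambda>x. a$(snd x)$j * weight a (fst x))"
  have L: "(\<Sum>m\<in>UNIV-{j}. a$j$m) * root_weight i j = (\<Sum>x\<in>SL. gL x)"
    using sum_in_arcs[of j "\<lambda>_. 1"] root_weight_pair_sum[of "\<lambda>m. a$j$m" "\<lambda>_. i" "\<lambda>_. j" Pin]
    by (simp add: sum_distrib_right Pin_def SL_def gL_def sum.inter_filter)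
  have R: "(\<Sum>k\<in>UNIV-{j}. a$k$j * root_weight i k) = (\<Sum>x\<in>SR. gR x)"
    using sum_out_arcs[where j=j and f="\<lambda>k. root_weight i k"]
      root_weight_pair_sum[of "\<lambda>k. a$k$j" "\<lambda>_. i" "\<lambda>k. k" Pout]
    by (simp add: Pout_def SR_def gR_def sum.inter_filter)
  define \<phi> where "\<phi> = (\<lambda>(F,m). (insert (m,j) (F - {(j, child F j m)}), child F j m))"
  define \<psi> where "\<psi> = (\<lambda>(G,k). (insert (j,k) (G - {(parent G j, j)}), parent G j))"
  have "(\<Sum>x\<in>SL. gL x) = (\<Sum>x\<in>SR. gR x)"
  proof (rule sum.reindex_bij_witness[of _ \<psi> \<phi>])
    fix x assume x: "x \<in> SL"
    obtain F m where xFm: "x = (F,m)" by (cases x)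
    have FM: "F \<in> max_forests" and mj: "(m,j) \<in> arcs a" and rt: "root_of F i = j"
      using x unfolding xFm SL_def Pin_def by simp_all
    note sw = reroot_forward[OF FM rt mj]
    show "\<psi> (\<phi> x) = x" by (simp only: xFm \<phi>_def \<psi>_def prod.case sw(4) sw(5))
    show "\<phi> x \<in> SR" unfolding xFm \<phi>_def prod.case SR_def Pout_def using sw(1,2,3) by simp
    show "gR (\<phi> x) = gL x" unfolding xFm \<phi>_def prod.case gR_def gL_def using sw(6) by simp
  next
    fix y assume y: "y \<in> SR"
    obtain G k where yGk: "y = (G,k)" by (cases y)
    have GM: "G \<in> max_forests" and jk: "(j,k) \<in> arcs a" and rt: "root_of G i = k"
      using y unfolding yGk SR_def Pout_def by simp_all
    note sw = reroot_backward[OF GM rt jk]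
    show "\<phi> (\<psi> y) = y" by (simp only: yGk \<phi>_def \<psi>_def prod.case sw(4) sw(5))
    show "\<psi> y \<in> SL" unfolding yGk \<psi>_def prod.case SL_def Pin_def using sw(1,2,3) by simp
  qed
  then have "(\<Sum>m\<in>UNIV-{j}. a$j$m) * root_weight i j = (\<Sum>k\<in>UNIV-{j}. a$k$j * root_weight i k)"
    using L R by simp
  then show ?thesis by (simp add: mult.commute)
qed

end

section \<open>Idempotence: grafting forests\<close>

definition graft :: "('n \<times> 'n) set \<Rightarrow> ('n \<times> 'n) set \<Rightarrow> 'n set \<Rightarrow> ('n \<times> 'n) set" where
  "graft F G K = {e\<in>F. snd e \<notin> K} \<union> {e\<in>G. snd e \<in> K}"

lemma graft_graft: "graft (graft F G K) (graft G F K) K = F"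
  by (auto simp: graft_def)

lemma graft_self: "graft F F K = F"
  by (auto simp: graft_def)

lemma card_graft:
  fixes F :: "('n::finite \<times> 'n) set"
  shows "card (graft F G K) = card {e\<in>F. snd e \<notin> K} + card {e\<in>G. snd e \<in> K}"
  unfolding graft_def by (rule card_Un_disjoint) auto

lemma weight_graft:
  fixes a :: "real^'n^'n"
  shows "weight a (graft F G K) = weight a {e\<in>F. snd e \<notin> K} * weight a {e\<in>G. snd e \<in> K}"
  unfolding graft_def weight_def by (rule prod.union_disjoint) auto

lemma graft_path_into:
  assumes closed: "\<And>u v. (u,v) \<in> G \<Longrightarrow> v \<in> K \<Longrightarrow> u \<in> K"
    and "(x,y) \<in> (graft F G K)\<^sup>*" "y \<in> K"
  shows "x \<in> K \<and> (x,y) \<in> G\<^sup>*"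
  using assms(2,3)
proof (induction rule: converse_rtrancl_induct)
  case (step x z)
  then have "(x,z) \<in> G" by (auto simp: graft_def)
  then show ?case using step closed by (meson converse_rtrancl_into_rtrancl)
qed simp

lemma graft_path_from:
  assumes closed: "\<And>u v. (u,v) \<in> G \<Longrightarrow> v \<in> K \<Longrightarrow> u \<in> K"
    and "(x,y) \<in> (graft F G K)\<^sup>*" "x \<notin> K"
  shows "y \<notin> K \<and> (x,y) \<in> F\<^sup>*"
  using assms(2,3)
proof (induction rule: rtrancl_induct)
  case (step w z)
  then have "z \<notin> K" using closed by (auto simp: graft_def)
  then show ?case using step by (auto simp: graft_def intro: rtrancl_into_rtrancl)
qed simp

text \<open>Hence a cycle of the graft would be a cycle of G or of F.\<close>
lemma graft_forest:
  fixes F G :: "('n::finite \<times> 'n) set"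
  assumes foF: "forest F" and foG: "forest G"
    and closed: "\<And>u v. (u,v) \<in> G \<Longrightarrow> v \<in> K \<Longrightarrow> u \<in> K"
  shows "forest (graft F G K)"
proof -
  let ?H = "graft F G K"
  have "single_parent ?H"
    unfolding single_parent_def
  proof (intro allI impI)
    fix u u' v assume "(u,v) \<in> ?H" "(u',v) \<in> ?H"
    then have "(u,v) \<in> F \<and> (u',v) \<in> F \<or> (u,v) \<in> G \<and> (u',v) \<in> G" by (auto simp: graft_def)
    then show "u = u'" using foF foG by (metis forest_def single_parent_eq)
  qed
  moreover have "acyclic ?H"
    unfolding acyclic_def
  proof (intro allI notI)
    fix z assume "(z,z) \<in> ?H\<^sup>+"
    then obtain w where zw: "(z,w) \<in> ?H" and wz: "(w,z) \<in> ?H\<^sup>*" by (blast dest: tranclD)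
    show False
    proof (cases "z \<in> K")
      case True
      then have "(z,w) \<in> G" "(w,z) \<in> G\<^sup>*"
        using graft_path_into[OF closed wz] zw by (auto simp: graft_def)
      then show False using foG by (auto simp: forest_def dest: acyclic_no_back_path)
    next
      case False
      then have "w \<notin> K" using graft_path_from[OF closed r_into_rtrancl[OF zw]] by simp
      then have "(z,w) \<in> F" "(w,z) \<in> F\<^sup>*"
        using graft_path_from[OF closed wz] zw False by (auto simp: graft_def)
      then show False using foF by (auto simp: forest_def dest: acyclic_no_back_path)
    qed
  qed
  ultimately show ?thesis by (simp add: forest_def)
qed

context weighted_digraph
begin

definition ancestors :: "'n \<Rightarrow> 'n set" where
  "ancestors r = {v. (v,r) \<in> (arcs a)\<^sup>*}"

lemma ancestors_self: "r \<in> ancestors r"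
  by (simp add: ancestors_def)

lemma ancestors_closed: "(x,y) \<in> (arcs a)\<^sup>* \<Longrightarrow> y \<in> ancestors r \<Longrightarrow> x \<in> ancestors r"
  unfolding ancestors_def by (meson mem_Collect_eq rtrancl_trans)

lemma rtrancl_arcs: "F \<subseteq> arcs a \<Longrightarrow> (x,y) \<in> F\<^sup>* \<Longrightarrow> (x,y) \<in> (arcs a)\<^sup>*"
  using rtrancl_mono by blast

lemma root_reaches_ancestors:
  "F \<in> max_forests \<Longrightarrow> is_root F r \<Longrightarrow> v \<in> ancestors r \<Longrightarrow> (r,v) \<in> F\<^sup>*"
  using root_reaches by (simp add: ancestors_def)

lemma ancestors_root_of:
  assumes FM: "F \<in> max_forests" and GM: "G \<in> max_forests" and np: "is_root F r"
  shows "ancestors (root_of G r) = ancestors r"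
proof -
  let ?s = "root_of G r"
  have foG: "forest G" using max_forests_props[OF GM] by simp
  have "(?s, r) \<in> G\<^sup>*" using root_props[OF foG] by simp
  then have sr: "(?s, r) \<in> (arcs a)\<^sup>*" using rtrancl_arcs max_forests_props(1)[OF GM] by blast
  then have "(r, ?s) \<in> F\<^sup>*" using root_reaches_ancestors[OF FM np] by (simp add: ancestors_def)
  then have rs: "(r, ?s) \<in> (arcs a)\<^sup>*" using rtrancl_arcs max_forests_props(1)[OF FM] by blast
  show ?thesis using sr rs unfolding ancestors_def by (auto intro: rtrancl_trans)
qed

lemma card_arcs_into_ancestors:
  assumes FM: "F \<in> max_forests" and np: "is_root F s"
  shows "card {e\<in>F. snd e \<in> ancestors s} + 1 = card (ancestors s)"
proof -
  let ?K = "ancestors s"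
  have sp: "single_parent F" using max_forests_props[OF FM] by simp
  have "bij_betw snd {e\<in>F. snd e \<in> ?K} (?K - {s})"
    unfolding bij_betw_def
  proof
    show "inj_on snd {e\<in>F. snd e \<in> ?K}"
      using single_parent_eq[OF sp] by (fastforce simp: inj_on_def)
    show "snd ` {e\<in>F. snd e \<in> ?K} = ?K - {s}"
    proof
      show "snd ` {e\<in>F. snd e \<in> ?K} \<subseteq> ?K - {s}" using np by (force simp: is_root_def)
      show "?K - {s} \<subseteq> snd ` {e\<in>F. snd e \<in> ?K}"
      proof
        fix v assume v: "v \<in> ?K - {s}"
        then have "(s,v) \<in> F\<^sup>+"
          using root_reaches_ancestors[OF FM np] by (auto simp: rtrancl_eq_or_trancl)
        then obtain u where "(u,v) \<in> F" by (blast dest: tranclD2)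
        then show "v \<in> snd ` {e\<in>F. snd e \<in> ?K}" using v by force
      qed
    qed
  qed
  then have "card {e\<in>F. snd e \<in> ?K} = card (?K - {s})" by (rule bij_betw_same_card)
  moreover have "card ?K > 0" using ancestors_self[of s] by (auto simp: card_gt_0_iff)
  ultimately show ?thesis using ancestors_self[of s] by simp
qed

lemma graft_max_forest:
  assumes FM: "F \<in> max_forests" and GM: "G \<in> max_forests" and npF: "is_root F r"
    and npG: "is_root G s" and As: "ancestors s = ancestors r"
  shows "graft F G (ancestors r) \<in> max_forests"
proof -
  let ?K = "ancestors r"
  have closed: "u \<in> ?K" if "(u,v) \<in> G" "v \<in> ?K" for u v
    using that max_forests_props(1)[OF GM] ancestors_closed[of u v r] by blast
  have fo: "forest (graft F G ?K)"
    by (rule graft_forest[OF max_forests_props(2)[OF FM] max_forests_props(2)[OF GM] closed])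
  have "card F = card {e\<in>F. snd e \<notin> ?K} + card {e\<in>F. snd e \<in> ?K}"
    using card_graft[of F F ?K] by (simp add: graft_self)
  moreover have "card {e\<in>F. snd e \<in> ?K} = card {e\<in>G. snd e \<in> ?K}"
    using card_arcs_into_ancestors[OF FM npF] card_arcs_into_ancestors[OF GM npG] As by simp
  ultimately have "card (graft F G ?K) = card F" by (simp add: card_graft)
  moreover have "graft F G ?K \<subseteq> arcs a"
    using max_forests_props(1)[OF FM] max_forests_props(1)[OF GM] by (auto simp: graft_def)
  ultimately show ?thesis using max_forests_intro[OF FM _ fo] by blast
qed

lemma graft_root:
  assumes FM: "F \<in> max_forests" and GM: "G \<in> max_forests" and npF: "is_root F r"
    and npG: "is_root G s" and As: "ancestors s = ancestors r" and rx: "(r,x) \<in> F\<^sup>*"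
  shows "root_of (graft F G (ancestors r)) x = s"
proof -
  let ?K = "ancestors r"
  let ?H = "graft F G ?K"
  have foH: "forest ?H"
    using max_forests_props(2)[OF graft_max_forest[OF FM GM npF npG As]] .
  have GA: "G \<subseteq> arcs a" using max_forests_props[OF GM] by simp
  have sK: "s \<in> ?K" using ancestors_self[of s] As by simp
  have npH: "is_root ?H s" using npG sK by (auto simp: is_root_def graft_def)
  have G2H: "(y,z) \<in> ?H\<^sup>*" if "(y,z) \<in> G\<^sup>*" "z \<in> ?K" for y z
    using that
  proof (induction rule: converse_rtrancl_induct)
    case (step y w)
    have "w \<in> ?K" using ancestors_closed[OF rtrancl_arcs[OF GA step.hyps(2)] step.prems] .
    then have "(y,w) \<in> ?H" using step.hyps(1) by (auto simp: graft_def)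
    then show ?case using step.IH step.prems by (meson converse_rtrancl_into_rtrancl)
  qed simp
  have sv: "(s,v) \<in> ?H\<^sup>*" if "v \<in> ?K" for v
    using G2H root_reaches_ancestors[OF GM npG] that As by simp
  have "(s,x) \<in> ?H\<^sup>*" using rx
  proof (induction rule: rtrancl_induct)
    case base then show ?case using sv ancestors_self[of r] by simp
  next
    case (step w z)
    show ?case
    proof (cases "z \<in> ?K")
      case True then show ?thesis using sv by simp
    next
      case False
      then have "(w,z) \<in> ?H" using step.hyps(2) by (auto simp: graft_def)
      then show ?thesis using step.IH by (meson rtrancl.rtrancl_into_rtrancl)
    qed
  qed
  then show ?thesis using root_eq[OF foH] npH by blast
qed

lemma root_weight_composition:
  "(\<Sum>k\<in>UNIV. root_weight i k * root_weight k j) =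
     (\<Sum>x\<in>max_forests\<times>max_forests. case x of (F,G) \<Rightarrow>
        if root_of G (root_of F i) = j then weight a F * weight a G else 0)"
proof -
  have "(\<Sum>k\<in>UNIV. root_weight i k * root_weight k j) =
      (\<Sum>k\<in>UNIV. \<Sum>F\<in>max_forests. if root_of F i = k then weight a F * root_weight k j else 0)"
    unfolding root_weight_def[of i] by (auto simp: sum_distrib_right intro!: sum.cong)
  also have "\<dots> =
      (\<Sum>F\<in>max_forests. \<Sum>k\<in>UNIV. if root_of F i = k then weight a F * root_weight k j else 0)"
    by (rule sum.swap)
  also have "\<dots> = (\<Sum>F\<in>max_forests. weight a F * root_weight (root_of F i) j)"
    by (simp add: sum.delta)
  also have "\<dots> = (\<Sum>x\<in>max_forests\<times>max_forests. case x of (F,G) \<Rightarrow>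
        if root_of G (root_of F i) = j then weight a F * weight a G else 0)"
    unfolding root_weight_def
    by (simp add: sum_distrib_left sum.cartesian_product case_prod_beta if_distrib cong: if_cong)
  finally show ?thesis .
qed

text \<open>The graft along the ancestors of the root of i is an involution on pairs of maximum
  out-forests that preserves the product of weights and exchanges the two conditions.\<close>
lemma root_weight_convolution:
  "(\<Sum>k\<in>UNIV. root_weight i k * root_weight k j) = total_weight * root_weight i j"
proof -
  define h where "h = (\<lambda>(F,G). if root_of G (root_of F i) = j then weight a F * weight a G else 0)"
  define g where "g = (\<lambda>(F,G). if root_of F i = j then weight a F * weight a G else 0)"
  have L: "(\<Sum>k\<in>UNIV. root_weight i k * root_weight k j) = (\<Sum>x\<in>max_forests\<times>max_forests. h x)"
    unfolding h_def by (rule root_weight_composition)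
  have R: "root_weight i j * total_weight = (\<Sum>x\<in>max_forests\<times>max_forests. g x)"
    unfolding total_weight_def root_weight_def g_def
    by (auto simp: sum_product sum.cartesian_product case_prod_beta intro!: sum.cong)
  define \<sigma> where "\<sigma> = (\<lambda>(F,G). (graft F G (ancestors (root_of F i)), graft G F (ancestors (root_of F i))))"
  have invol: "\<sigma> x \<in> max_forests\<times>max_forests \<and> \<sigma> (\<sigma> x) = x \<and> g (\<sigma> x) = h x"
    if x: "x \<in> max_forests\<times>max_forests" for x
  proof -
    obtain F G where xFG: "x = (F,G)" and FM: "F \<in> max_forests" and GM: "G \<in> max_forests"
      using x by auto
    define r where "r = root_of F i"
    define s where "s = root_of G r"
    have foF: "forest F" and foG: "forest G" using max_forests_props FM GM by auto
    have npF: "is_root F r" and ri: "(r,i) \<in> F\<^sup>*" using root_props[OF foF] by (auto simp: r_def)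
    have npG: "is_root G s" using root_props[OF foG] by (auto simp: s_def)
    have As: "ancestors s = ancestors r" using ancestors_root_of[OF FM GM npF] by (simp add: s_def)
    define F' where "F' = graft F G (ancestors r)"
    define G' where "G' = graft G F (ancestors r)"
    have sx: "\<sigma> x = (F', G')" by (simp add: xFG \<sigma>_def F'_def G'_def r_def)
    have F'M: "F' \<in> max_forests" using graft_max_forest[OF FM GM npF npG As] by (simp add: F'_def)
    have G'M: "G' \<in> max_forests"
      using graft_max_forest[OF GM FM npG npF As[symmetric]] As by (simp add: G'_def)
    have rF': "root_of F' i = s" using graft_root[OF FM GM npF npG As ri] by (simp add: F'_def)
    have "\<sigma> (\<sigma> x) = (graft F' G' (ancestors s), graft G' F' (ancestors s))"
      unfolding sx by (simp add: \<sigma>_def rF')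
    also have "\<dots> = x" by (simp add: As F'_def G'_def graft_graft xFG)
    finally have "\<sigma> (\<sigma> x) = x" .
    moreover have "weight a F' * weight a G' = weight a F * weight a G"
      unfolding F'_def G'_def weight_graft weight_split[of a F "ancestors r"]
        weight_split[of a G "ancestors r"]
      by (simp add: algebra_simps)
    then have "g (\<sigma> x) = h x" using rF' unfolding sx by (simp add: xFG g_def h_def r_def s_def)
    ultimately show ?thesis using sx F'M G'M by simp
  qed
  have "(\<Sum>x\<in>max_forests\<times>max_forests. h x) = (\<Sum>x\<in>max_forests\<times>max_forests. g x)"
    by (rule sum.reindex_bij_witness[of _ \<sigma> \<sigma>]) (use invol in auto)
  then show ?thesis using L R by (simp add: mult.commute)
qed

end

lemma kirchhoff_mult_entry:
  fixes X :: "real^'n^'n"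
  shows "(kirchhoff a ** X) $ i $ j =
    (\<Sum>k\<in>UNIV-{i}. a$i$k) * X$i$j - (\<Sum>k\<in>UNIV-{i}. a$i$k * X$k$j)"
proof -
  have "(kirchhoff a ** X) $ i $ j = kirchhoff a $ i $ i * X$i$j + (\<Sum>k\<in>UNIV-{i}. kirchhoff a $ i $ k * X$k$j)"
    unfolding matrix_matrix_mult_def by (simp add: sum.remove)
  also have "(\<Sum>k\<in>UNIV-{i}. kirchhoff a $ i $ k * X$k$j) = - (\<Sum>k\<in>UNIV-{i}. a$i$k * X$k$j)"
    by (simp add: kirchhoff_def sum_negf)
  finally show ?thesis by (simp add: kirchhoff_def)
qed

lemma mult_kirchhoff_entry:
  fixes X :: "real^'n^'n"
  shows "(X ** kirchhoff a) $ i $ j =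
    X$i$j * (\<Sum>m\<in>UNIV-{j}. a$j$m) - (\<Sum>k\<in>UNIV-{j}. X$i$k * a$k$j)"
proof -
  have "(X ** kirchhoff a) $ i $ j = X$i$j * kirchhoff a $ j $ j + (\<Sum>k\<in>UNIV-{j}. X$i$k * kirchhoff a $ k $ j)"
    unfolding matrix_matrix_mult_def by (simp add: sum.remove)
  also have "(\<Sum>k\<in>UNIV-{j}. X$i$k * kirchhoff a $ k $ j) = - (\<Sum>k\<in>UNIV-{j}. X$i$k * a$k$j)"
    by (simp add: kirchhoff_def sum_negf)
  finally show ?thesis by (simp add: kirchhoff_def)
qed

context weighted_digraph
begin

abbreviation J :: "real^'n^'n" where
  "J \<equiv> norm_max_out_forest_matrix a"

text \<open>Every vertex i is counted on the diagonal exactly by the forests in which it is a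
  root, so the diagonal weights add up to (number of trees) x (total weight).\<close>
lemma root_weight_trace:
  assumes F0: "F0 \<in> max_forests"
  shows "(\<Sum>i\<in>UNIV. root_weight i i) = real (CARD('n) - card F0) * total_weight"
proof -
  have roots: "(\<Sum>i\<in>UNIV. if root_of F i = i then weight a F else 0)
      = real (CARD('n) - card F0) * weight a F" if FM: "F \<in> max_forests" for F
  proof -
    have fo: "forest F" using max_forests_props[OF FM] by simp
    have "root_of F i = i \<longleftrightarrow> is_root F i" for i using root_eq[OF fo, of i i] by simp
    then have "(\<Sum>i\<in>UNIV. if root_of F i = i then weight a F else 0)
        = real (card {i. is_root F i}) * weight a F"
      by (simp add: sum.If_cases)
    moreover have "card {i. is_root F i} = CARD('n) - card F0"
      using forest_card[OF fo] max_forests_card[OF FM F0] by simp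
    ultimately show ?thesis by simp
  qed
  have "(\<Sum>i\<in>UNIV. root_weight i i) =
      (\<Sum>F\<in>max_forests. \<Sum>i\<in>UNIV. if root_of F i = i then weight a F else 0)"
    unfolding root_weight_def by (rule sum.swap)
  also have "\<dots> = real (CARD('n) - card F0) * total_weight"
    by (simp add: roots total_weight_def sum_distrib_left)
  finally show ?thesis .
qed

lemma J_idempotent: "J ** J = J"
proof -
  have "(J ** J) $ i $ j = J $ i $ j" for i j
  proof -
    have "(J ** J) $ i $ j = (\<Sum>k\<in>UNIV. root_weight i k * root_weight k j) / total_weight^2"
      by (simp add: matrix_matrix_mult_def norm_max_out_forest_entry sum_divide_distrib power2_eq_square)
    also have "\<dots> = J $ i $ j"
      using total_weight_pos
      by (simp add: root_weight_convolution norm_max_out_forest_entry power2_eq_square)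
    finally show ?thesis .
  qed
  then show ?thesis by (simp add: vec_eq_iff)
qed

lemma kirchhoff_J: "kirchhoff a ** J = 0"
proof -
  have "(kirchhoff a ** J) $ i $ j = 0" for i j
  proof -
    have "(kirchhoff a ** J) $ i $ j = ((\<Sum>k\<in>UNIV-{i}. a$i$k) * root_weight i j
        - (\<Sum>k\<in>UNIV-{i}. a$i$k * root_weight k j)) / total_weight"
      by (simp add: kirchhoff_mult_entry norm_max_out_forest_entry sum_divide_distrib diff_divide_distrib)
    then show ?thesis by (simp add: root_weight_row_balance)
  qed
  then show ?thesis by (simp add: vec_eq_iff)
qed

lemma J_kirchhoff: "J ** kirchhoff a = 0"
proof -
  have "(J ** kirchhoff a) $ i $ j = 0" for i j
  proof -
    have "(J ** kirchhoff a) $ i $ j = (root_weight i j * (\<Sum>m\<in>UNIV-{j}. a$j$m)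
        - (\<Sum>k\<in>UNIV-{j}. root_weight i k * a$k$j)) / total_weight"
      by (simp add: mult_kirchhoff_entry norm_max_out_forest_entry sum_divide_distrib diff_divide_distrib)
    then show ?thesis by (simp add: root_weight_column_balance)
  qed
  then show ?thesis by (simp add: vec_eq_iff)
qed

text \<open>The trace of J, and hence its rank, is the number of trees of a maximum out-forest.\<close>
lemma rank_J:
  assumes F0: "F0 \<in> max_forests"
  shows "rank J = CARD('n) - card F0"
proof -
  have "real (rank J) = trace J" by (rule rank_idempotent[OF J_idempotent])
  also have "\<dots> = (\<Sum>i\<in>UNIV. root_weight i i) / total_weight"
    by (simp add: trace_def norm_max_out_forest_entry sum_divide_distrib)
  also have "\<dots> = real (CARD('n) - card F0)" using root_weight_trace[OF F0] total_weight_pos by simp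
  finally show ?thesis by simp
qed

lemma out_forest_dim_eq:
  assumes F0: "F0 \<in> max_forests"
  shows "out_forest_dim a = CARD('n) - card F0"
proof -
  define F1 where "F1 = (SOME F. max_out_forest a F)"
  have F1M: "F1 \<in> max_forests"
    unfolding F1_def max_forests_def using someI_ex[OF max_out_forest_exists] by simp
  have fo: "forest F1" using max_forests_props[OF F1M] by simp
  have "out_forest_dim a = card {r. is_root F1 r}"
    using num_trees_eq[OF fo] by (simp add: out_forest_dim_def F1_def)
  also have "\<dots> = CARD('n) - card F0" using forest_card[OF fo] max_forests_card[OF F1M F0] by simp
  finally show ?thesis .
qed

end

theorem proposition5:
  fixes a :: "real^'n^'n"
  assumes nonneg: "\<And>i j. i \<noteq> j \<Longrightarrow> a $ i $ j \<ge> 0"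
  shows "rank (norm_max_out_forest_matrix a) = out_forest_dim a \<and>
         norm_max_out_forest_matrix a ** norm_max_out_forest_matrix a = norm_max_out_forest_matrix a \<and>
         kirchhoff a ** norm_max_out_forest_matrix a = 0 \<and>
         norm_max_out_forest_matrix a ** kirchhoff a = 0"
proof -
  interpret weighted_digraph a using nonneg by unfold_locales
  obtain F0 where F0: "F0 \<in> max_forests"
    using max_out_forest_exists by (auto simp: max_forests_def)
  show ?thesis
    using rank_J[OF F0] out_forest_dim_eq[OF F0] J_idempotent kirchhoff_J J_kirchhoff by simp
qed

end
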